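(* If $X$ is a minimal dendric shift over $\mathcal{A}$ that is planar for the pair of total orders $(\le^L,\le^R)$, then $G^L(X)=G(\le^L)$ and $G^R(X)=G(\le^R)$.
   Context: Shift spaces over a finite alphabet $\mathcal{A}$: nonempty closed shift-invariant $X\subseteq\mathcal{A}^{\mathbb{Z}}$, language $\mathcal{L}(X)$ containing all letters, $\mathcal{L}_n(X)$ its words of length $n$; minimal if no nonempty proper closed invariant subset. $E^L_X(w)=\{a:aw\in\mathcal{L}(X)\}$, $E^R_X(w)=\{b:wb\in\mathcal{L}(X)\}$, $E_X(w)=\{(a,b):awb\in\mathcal{L}(X)\}$; $\mathcal{E}_X(w)$ bipartite graph on disjoint copies of $E^L_X(w),E^R_X(w)$ with edges $E_X(w)$; $X$ dendric if every $\mathcal{E}_X(w)$ is a tree. $X$ is planar for $(\le^L,\le^R)$ if for every $w\in\mathcal{L}(X)$ and all $(a_1,b_1),(a_2,b_2)\in E_X(w)$, $a_1<^La_2$ implies $b_1\le^Rb_2$. Multi-clique $G(\{C_1,\dots,C_k\})$ on $\mathcal{A}$: every pair of distinct elements of $C_i$ joined by an edge of color $c_i$, colors distinct; colored multigraphs identified up to bijection of colors. For a dendric (or eventually dendric) shift there is $N$ such that for $n\ge N$ the multi-clique built from the family $(E^L_X(v))_{v\in\mathcal{L}_n(X)}$ does not depend on $n$; this is $G^L(X)$; $G^R(X)$ is defined likewise from right extensions. For a total order $\le$ with $c_1<c_2<\dots<c_n$ the letters of $\mathcal{A}$, $G(\le)$ is the graph on $\mathcal{A}$ whose edges are $\{c_i,c_{i+1}\}$,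 $i<n$, each with its own color. *)

theory Defs
  imports Main
begin

(* Points of A^Z are functions int => 'a; the alphabet is the finite type 'a (A = UNIV). *)

definition shift :: "(int \<Rightarrow> 'a) \<Rightarrow> int \<Rightarrow> 'a" where
  "shift x = (\<lambda>i. x (i + 1))"

(* closedness in the product of discrete topologies: x belongs to X whenever
   every central cylinder of x meets X *)
definition closed_sh :: "(int \<Rightarrow> 'a) set \<Rightarrow> bool" where
  "closed_sh X \<longleftrightarrow>
     (\<forall>x. (\<forall>n::nat. \<exists>y\<in>X. \<forall>i. \<bar>i\<bar> \<le> int n \<longrightarrow> y i = x i) \<longrightarrow> x \<in> X)"

definition lang :: "(int \<Rightarrow> 'a) set \<Rightarrow> 'a list set" where
  "lang X = {w. \<exists>x\<in>X. \<exists>i. w = map (\<lambda>j. x (i + int j)) [0..<length w]}"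

definition lang_n :: "(int \<Rightarrow> 'a) set \<Rightarrow> nat \<Rightarrow> 'a list set" where
  "lang_n X n = {w \<in> lang X. length w = n}"

definition shift_space :: "(int \<Rightarrow> 'a) set \<Rightarrow> bool" where
  "shift_space X \<longleftrightarrow> X \<noteq> {} \<and> closed_sh X \<and> shift ` X = X \<and> (\<forall>a. [a] \<in> lang X)"

definition minimal_shift :: "(int \<Rightarrow> 'a) set \<Rightarrow> bool" where
  "minimal_shift X \<longleftrightarrow> shift_space X \<and>
     (\<forall>Y. Y \<subseteq> X \<and> Y \<noteq> {} \<and> closed_sh Y \<and> shift ` Y = Y \<longrightarrow> Y = X)"

definition ext_L :: "(int \<Rightarrow> 'a) set \<Rightarrow> 'a list \<Rightarrow> 'a set" where
  "ext_L X w = {a. a # w \<in> lang X}"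

definition ext_R :: "(int \<Rightarrow> 'a) set \<Rightarrow> 'a list \<Rightarrow> 'a set" where
  "ext_R X w = {b. w @ [b] \<in> lang X}"

definition ext :: "(int \<Rightarrow> 'a) set \<Rightarrow> 'a list \<Rightarrow> ('a \<times> 'a) set" where
  "ext X w = {(a, b). a # w @ [b] \<in> lang X}"

(* extension graph: bipartite graph on disjoint copies (Inl / Inr) of E^L(w), E^R(w) *)
definition ext_vertices :: "(int \<Rightarrow> 'a) set \<Rightarrow> 'a list \<Rightarrow> ('a + 'a) set" where
  "ext_vertices X w = Inl ` ext_L X w \<union> Inr ` ext_R X w"

definition ext_adj :: "(int \<Rightarrow> 'a) set \<Rightarrow> 'a list \<Rightarrow> ('a + 'a) \<Rightarrow> ('a + 'a) \<Rightarrow> bool" where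
  "ext_adj X w u v \<longleftrightarrow> (\<exists>a b. (a, b) \<in> ext X w \<and>
      ((u = Inl a \<and> v = Inr b) \<or> (u = Inr b \<and> v = Inl a)))"

definition is_tree :: "'v set \<Rightarrow> ('v \<Rightarrow> 'v \<Rightarrow> bool) \<Rightarrow> bool" where
  "is_tree V adj \<longleftrightarrow> V \<noteq> {} \<and>
     (\<forall>u\<in>V. \<forall>v\<in>V. adj\<^sup>*\<^sup>* u v) \<and>
     \<not> (\<exists>cs. 3 \<le> length cs \<and> distinct cs \<and> set cs \<subseteq> V \<and>
            (\<forall>i < length cs. adj (cs ! i) (cs ! ((i + 1) mod length cs))))"

definition dendric :: "(int \<Rightarrow> 'a) set \<Rightarrow> bool" where
  "dendric X \<longleftrightarrow> (\<forall>w \<in> lang X. is_tree (ext_vertices X w) (ext_adj X w))"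

definition planar :: "(int \<Rightarrow> 'a) set \<Rightarrow> 'a rel \<Rightarrow> 'a rel \<Rightarrow> bool" where
  "planar X rL rR \<longleftrightarrow> (\<forall>w \<in> lang X. \<forall>a1 b1 a2 b2.
      (a1, b1) \<in> ext X w \<longrightarrow> (a2, b2) \<in> ext X w \<longrightarrow>
      (a1, a2) \<in> rL \<and> a1 \<noteq> a2 \<longrightarrow> (b1, b2) \<in> rR)"

(* edge-coloured multigraphs on the alphabet: sets of (colour, edge) with edge = {a,b}, a \<noteq> b *)
definition multi_clique :: "'c set \<Rightarrow> ('c \<Rightarrow> 'a set) \<Rightarrow> ('c \<times> 'a set) set" where
  "multi_clique I C = {(c, {a, b}) | c a b. c \<in> I \<and> a \<in> C c \<and> b \<in> C c \<and> a \<noteq> b}"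

definition cgraph_iso :: "('c \<times> 'a set) set \<Rightarrow> ('d \<times> 'a set) set \<Rightarrow> bool" where
  "cgraph_iso G H \<longleftrightarrow> (\<exists>f. bij_betw f (fst ` G) (fst ` H) \<and> H = (\<lambda>(c, e). (f c, e)) ` G)"

definition GL_is :: "(int \<Rightarrow> 'a) set \<Rightarrow> ('c \<times> 'a set) set \<Rightarrow> bool" where
  "GL_is X G \<longleftrightarrow> (\<exists>N. \<forall>n\<ge>N. cgraph_iso (multi_clique (lang_n X n) (ext_L X)) G)"

definition GR_is :: "(int \<Rightarrow> 'a) set \<Rightarrow> ('c \<times> 'a set) set \<Rightarrow> bool" where
  "GR_is X G \<longleftrightarrow> (\<exists>N. \<forall>n\<ge>N. cgraph_iso (multi_clique (lang_n X n) (ext_R X)) G)"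

definition order_enum :: "'a rel \<Rightarrow> 'a list" where
  "order_enum r = (THE cs. distinct cs \<and> set cs = UNIV \<and> sorted_wrt (\<lambda>x y. (x, y) \<in> r) cs)"

definition order_graph :: "'a rel \<Rightarrow> (nat \<times> 'a set) set" where
  "order_graph r = (let cs = order_enum r in
     {(i, {cs ! i, cs ! Suc i}) | i. Suc i < length cs})"

end

theory Submission
  imports Defs
begin

text \<open>Planarity makes the left extensions of every word an interval of \<open>\<le>\<^sup>L\<close>. If two letters
  \<open>c <\<^sup>L c'\<close> are consecutive, connectedness of the extension graph forces \<open>c w\<close> and \<open>c' w\<close> to
  share a right extension, which is unique since the graph has no cycle; so for every \<open>n\<close> exactly
  one word of length \<open>n\<close> is left extendable by both \<open>c\<close> and \<open>c'\<close>. Conversely, suppose that for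
  arbitrarily long words some letter \<open>b\<close> is a left extension strictly between two others. Then
  planarity determines the right extensions of \<open>b v\<close>, so \<open>b\<close> has a single future; since \<open>b\<close>
  returns (minimality) this future is periodic and bounds the complexity, whereas the left special
  words force the complexity to exceed \<open>n\<close> in length \<open>n\<close>. Hence for long words every left special
  word has exactly two, consecutive, left extensions, and \<open>G\<^sup>L(X) = G(\<le>\<^sup>L)\<close>. The right graph is
  obtained by reversing all words.\<close>

lemma linear_order_antisym: "linear_order r \<Longrightarrow> (x, y) \<in> r \<Longrightarrow> (y, x) \<in> r \<Longrightarrow> x = y"
  unfolding linear_order_on_def partial_order_on_def antisym_def by blast

lemma linear_order_refl: "linear_order r \<Longrightarrow> (x, x) \<in> r"
  unfolding linear_order_on_def partial_order_on_def preorder_on_def refl_on_def by blast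

lemma linear_order_trans: "linear_order r \<Longrightarrow> (x, y) \<in> r \<Longrightarrow> (y, z) \<in> r \<Longrightarrow> (x, z) \<in> r"
  unfolding linear_order_on_def partial_order_on_def preorder_on_def trans_def by blast

lemma linear_order_total:
  assumes "linear_order r"
  shows "(x, y) \<in> r \<or> (y, x) \<in> r"
  using assms linear_order_refl[OF assms, of x] unfolding linear_order_on_def total_on_def
  by (cases "x = y") auto

lemma linear_order_class_linorder:
  assumes "linear_order r"
  shows "class.linorder (\<lambda>x y. (x, y) \<in> r) (\<lambda>x y. (x, y) \<in> r \<and> x \<noteq> y)"
  using linear_order_refl[OF assms] linear_order_trans[OF assms] linear_order_antisym[OF assms]
    linear_order_total[OF assms]
  by unfold_locales metis+

lemma order_enum:
  fixes r :: "('a::finite) rel"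
  assumes "linear_order r"
  shows "sorted_wrt (\<lambda>x y. (x, y) \<in> r \<and> x \<noteq> y) (order_enum r)" and "set (order_enum r) = UNIV"
    and "distinct (order_enum r)"
proof -
  interpret linorder "\<lambda>x y. (x, y) \<in> r" "\<lambda>x y. (x, y) \<in> r \<and> x \<noteq> y"
    by (rule linear_order_class_linorder[OF assms])
  have "\<exists>!cs. distinct cs \<and> set cs = UNIV \<and> sorted_wrt (\<lambda>x y. (x, y) \<in> r) cs"
    using ex1_sorted_list_for_set_if_finite[of UNIV] unfolding strict_sorted_iff
    by (simp add: conj_commute conj_left_commute)
  then have "distinct (order_enum r) \<and> set (order_enum r) = UNIV
      \<and> sorted_wrt (\<lambda>x y. (x, y) \<in> r) (order_enum r)"
    unfolding order_enum_def by (rule theI')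
  then show "sorted_wrt (\<lambda>x y. (x, y) \<in> r \<and> x \<noteq> y) (order_enum r)" "set (order_enum r) = UNIV"
    and "distinct (order_enum r)"
    by (simp_all add: strict_sorted_iff)
qed

lemma order_enum_less_iff:
  fixes r :: "('a::finite) rel"
  assumes r: "linear_order r" and "i < length (order_enum r)" "j < length (order_enum r)"
  shows "(order_enum r ! i, order_enum r ! j) \<in> r \<and> order_enum r ! i \<noteq> order_enum r ! j \<longleftrightarrow> i < j"
proof -
  let ?cs = "order_enum r"
  have less: "(?cs ! i, ?cs ! j) \<in> r \<and> ?cs ! i \<noteq> ?cs ! j" if "i < j" "j < length ?cs" for i j
    using order_enum(1)[OF r] that unfolding sorted_wrt_iff_nth_less by blast
  show ?thesis
    using less[of i j] less[of j i] linear_order_antisym[OF r] assms(2,3)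
    by (cases i j rule: linorder_cases) auto
qed

lemma cgraph_iso_refl: "cgraph_iso G G"
  unfolding cgraph_iso_def by (intro exI[of _ id]) (simp add: case_prod_unfold)

lemma cgraph_iso_relabel:
  assumes h: "inj_on h (fst ` G)" and iso: "cgraph_iso G H"
  shows "cgraph_iso ((\<lambda>(c, e). (h c, e)) ` G) H"
proof -
  obtain f where f: "bij_betw f (fst ` G) (fst ` H)" "H = (\<lambda>(c, e). (f c, e)) ` G"
    using iso unfolding cgraph_iso_def by blast
  define f' where "f' = f \<circ> inv_into (fst ` G) h"
  have fst_relabel: "fst ` (\<lambda>(c, e). (h c, e)) ` G = h ` fst ` G"
    by (force simp: image_image case_prod_unfold)
  have "bij_betw f' (h ` fst ` G) (fst ` H)"
    unfolding f'_def using bij_betw_trans[OF bij_betw_inv_into[OF inj_on_imp_bij_betw[OF h]] f(1)] .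
  moreover have "(\<lambda>(c, e). (f' c, e)) ` (\<lambda>(c, e). (h c, e)) ` G = H"
    unfolding f(2) image_image f'_def
    by (rule image_cong) (auto simp: case_prod_unfold inv_into_f_f[OF h] rev_image_eqI)
  ultimately show ?thesis
    unfolding cgraph_iso_def fst_relabel by blast
qed

lemma multi_clique_image:
  "multi_clique (h ` I) C = (\<lambda>(c, e). (h c, e)) ` multi_clique I (\<lambda>v. C (h v))"
  unfolding multi_clique_def by (auto simp: image_iff) blast+

lemma cgraph_iso_multi_clique_image:
  assumes "inj_on h I" and "cgraph_iso (multi_clique I (\<lambda>v. C (h v))) H"
  shows "cgraph_iso (multi_clique (h ` I) C) H"
proof -
  have "fst ` multi_clique I (\<lambda>v. C (h v)) \<subseteq> I"
    unfolding multi_clique_def by auto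
  then show ?thesis
    unfolding multi_clique_image using assms by (blast intro: cgraph_iso_relabel inj_on_subset)
qed

definition window :: "(int \<Rightarrow> 'a) \<Rightarrow> int \<Rightarrow> nat \<Rightarrow> 'a list" where
  "window x i n = map (\<lambda>j. x (i + int j)) [0..<n]"

lemma length_window [simp]: "length (window x i n) = n"
  by (simp add: window_def)

lemma nth_window [simp]: "j < n \<Longrightarrow> window x i n ! j = x (i + int j)"
  by (simp add: window_def)

lemma window_add: "window x i (m + n) = window x i m @ window x (i + int m) n"
  by (rule nth_equalityI) (auto simp: nth_append add.assoc)

lemma window_Suc_left: "window x i (Suc n) = x i # window x (i + 1) n"
  using window_add[of x i 1 n] by (simp add: window_def)

lemma window_factor:
  assumes "j \<le> i" "i + int n \<le> j + int m"
  shows "\<exists>p s. window x j m = p @ window x i n @ s"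
proof -
  define k where "k = nat (i - j)"
  have m: "m = k + (n + (m - k - n))" and i: "i = j + int k"
    using assms unfolding k_def by auto
  show ?thesis
    by (subst m, subst i) (metis window_add)
qed

lemma lang_window: "w \<in> lang X \<longleftrightarrow> (\<exists>x\<in>X. \<exists>i. w = window x i (length w))"
  unfolding lang_def window_def by blast

lemma lang_prefix: "u @ v \<in> lang X \<Longrightarrow> u \<in> lang X"
  unfolding lang_window by (metis length_append window_add append_eq_append_conv length_window)

lemma lang_suffix: "u @ v \<in> lang X \<Longrightarrow> v \<in> lang X"
  unfolding lang_window by (metis length_append window_add append_eq_append_conv length_window)

lemma lang_extend_left: "w \<in> lang X \<Longrightarrow> \<exists>a. a # w \<in> lang X"
  unfolding lang_window by (metis window_Suc_left diff_add_cancel length_Cons)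

lemma lang_extend_right: "w \<in> lang X \<Longrightarrow> \<exists>s. length s = n \<and> w @ s \<in> lang X"
  unfolding lang_window by (metis window_add length_window)

section \<open>Compactness and irreducibility\<close>

definition two_sided_extendable :: "'a list set \<Rightarrow> 'a list \<Rightarrow> bool" where
  "two_sided_extendable F u \<longleftrightarrow> (\<forall>n. \<exists>p s. length p = n \<and> length s = n \<and> p @ u @ s \<in> F)"

lemma two_sided_extendable_Nil:
  assumes long: "\<And>n. \<exists>u\<in>F. length u = n"
  shows "two_sided_extendable F []"
  unfolding two_sided_extendable_def
proof
  fix n
  obtain u where "u \<in> F" "length u = n + n"
    using long by blast
  then show "\<exists>p s. length p = n \<and> length s = n \<and> p @ [] @ s \<in> F"
    by (intro exI[of _ "take n u"] exI[of _ "drop n u"]) auto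
qed

lemma two_sided_extendable_step:
  fixes F :: "('a::finite) list set"
  assumes factor: "\<And>u v w. u @ v @ w \<in> F \<Longrightarrow> v \<in> F" and u: "two_sided_extendable F u"
  shows "\<exists>a c. two_sided_extendable F (a # u @ [c])"
proof (rule ccontr)
  assume "\<not> ?thesis"
  then have "\<forall>ac. \<exists>n. \<not> (\<exists>p s. length p = n \<and> length s = n \<and> p @ (fst ac # u @ [snd ac]) @ s \<in> F)"
    unfolding two_sided_extendable_def by auto
  then obtain bound where bound: "\<And>ac. \<not> (\<exists>p s. length p = bound ac \<and> length s = bound ac
      \<and> p @ (fst ac # u @ [snd ac]) @ s \<in> F)"
    by metis
  define M where "M = Max (range bound)"
  obtain p s where ps: "length p = Suc M" "length s = Suc M" "p @ u @ s \<in> F"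
    using u unfolding two_sided_extendable_def by blast
  obtain p0 a c s0 where p: "p = p0 @ [a]" and s: "s = c # s0"
    using ps(1,2) by (metis length_Suc_conv length_Suc_conv_rev)
  define k where "k = M - bound (a, c)"
  have "p0 @ (a # u @ [c]) @ s0
      = take k p0 @ (drop k p0 @ (a # u @ [c]) @ take (bound (a, c)) s0) @ drop (bound (a, c)) s0"
    by (metis append_take_drop_id append.assoc)
  moreover have "p0 @ (a # u @ [c]) @ s0 \<in> F"
    using ps(3) p s by simp
  ultimately have
    "take k p0 @ (drop k p0 @ (a # u @ [c]) @ take (bound (a, c)) s0) @ drop (bound (a, c)) s0 \<in> F"
    by (rule subst)
  then have "drop k p0 @ (a # u @ [c]) @ take (bound (a, c)) s0 \<in> F"
    by (rule factor)
  moreover have "bound (a, c) \<le> M"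
    unfolding M_def by simp
  ultimately show False
    using bound[of "(a, c)"] ps p s unfolding k_def by auto
qed

lemma centered_chain_limit:
  assumes "U 0 = []" and grow: "\<And>k. \<exists>a c. U (Suc k) = a # U k @ [c]"
  shows "\<exists>x. \<forall>k. window x (- int k) (2 * k) = U k"
proof -
  define x where "x i = (if i < 0 then hd (U (nat (- i))) else last (U (Suc (nat i))))" for i
  have "window x (- int k) (2 * k) = U k" for k
  proof (induction k)
    case (Suc k)
    obtain a c where U: "U (Suc k) = a # U k @ [c]"
      using grow by blast
    have "window x (- int (Suc k)) (2 * Suc k)
        = window x (- int (Suc k)) 1 @ window x (- int k) (2 * k) @ window x (int k) 1"
      using window_add[of x "- int (Suc k)" 1 "2 * k + 1"] window_add[of x "- int k" "2 * k" 1]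
      by (simp add: algebra_simps)
    also have "\<dots> = x (- int (Suc k)) # window x (- int k) (2 * k) @ [x (int k)]"
      by (simp add: window_def)
    also have "\<dots> = U (Suc k)"
      using Suc.IH U unfolding x_def by (simp add: nat_add_distrib)
    finally show ?case .
  qed (simp add: assms(1) window_def)
  then show ?thesis by blast
qed

lemma factorial_language_point:
  fixes F :: "('a::finite) list set"
  assumes factor: "\<And>u v w. u @ v @ w \<in> F \<Longrightarrow> v \<in> F" and long: "\<And>n. \<exists>u\<in>F. length u = n"
  shows "\<exists>x. \<forall>i n. window x i n \<in> F"
proof -
  define next_word where
    "next_word u = (SOME u'. (\<exists>a c. u' = a # u @ [c]) \<and> two_sided_extendable F u')" for u
  have next_word: "(\<exists>a c. next_word u = a # u @ [c]) \<and> two_sided_extendable F (next_word u)"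
    if "two_sided_extendable F u" for u
    unfolding next_word_def
    by (rule someI_ex) (use two_sided_extendable_step[of F u] factor that in blast)
  define U where "U k = (next_word ^^ k) []" for k
  have U: "two_sided_extendable F (U k)" for k
    by (induction k) (simp_all add: U_def two_sided_extendable_Nil[OF long] next_word)
  have "U 0 = []"
    by (simp add: U_def)
  moreover have "\<exists>a c. U (Suc k) = a # U k @ [c]" for k
    using next_word[OF U[of k]] by (simp add: U_def)
  ultimately obtain x where x: "\<And>k. window x (- int k) (2 * k) = U k"
    using centered_chain_limit[of U] by blast
  have "window x i n \<in> F" for i n
  proof -
    define K where "K = nat \<bar>i\<bar> + n"
    have "- int K \<le> i" "i + int n \<le> - int K + int (2 * K)"
      unfolding K_def by auto
    then obtain p s where "U K = p @ window x i n @ s"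
      using window_factor[of "- int K" i n "2 * K" x] x by metis
    moreover obtain p' s' where "length p' = 0" "length s' = 0" "p' @ U K @ s' \<in> F"
      using U[of K] unfolding two_sided_extendable_def by blast
    ultimately have "p @ window x i n @ s \<in> F"
      by simp
    then show ?thesis
      by (rule factor)
  qed
  then show ?thesis by blast
qed

lemma shift_space_translate:
  assumes "shift_space X"
  shows "x \<in> X \<Longrightarrow> (\<lambda>j. x (j + k)) \<in> X"
proof (induction k arbitrary: x rule: int_induct[where k = 0])
  case (step1 k)
  then have "shift (\<lambda>j. x (j + k)) \<in> X"
    using assms unfolding shift_space_def by blast
  then show ?case
    unfolding shift_def by (simp add: algebra_simps)
next
  case (step2 k)
  then obtain y where y: "y \<in> X" "(\<lambda>j. x (j + k)) = shift y"
    using assms unfolding shift_space_def by (metis image_iff)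
  have "y j = x (j + (k - 1))" for j
    using fun_cong[OF y(2), of "j - 1"] unfolding shift_def by (simp add: algebra_simps)
  then show ?case
    using y(1) by (metis ext)
qed simp

lemma shift_space_mem_if_windows:
  assumes X: "shift_space X" and windows: "\<And>i n. window x i n \<in> lang X"
  shows "x \<in> X"
proof -
  have "\<exists>y\<in>X. \<forall>i. \<bar>i\<bar> \<le> int n \<longrightarrow> y i = x i" for n
  proof -
    obtain y i0 where y: "y \<in> X" "window x (- int n) (2 * n + 1) = window y i0 (2 * n + 1)"
      using windows unfolding lang_window by (metis length_window)
    have "y (t + (i0 + int n)) = x t" if "\<bar>t\<bar> \<le> int n" for t
    proof -
      define j where "j = nat (t + int n)"
      have j: "j < 2 * n + 1" "int j = t + int n"
        using that unfolding j_def by auto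
      have "window x (- int n) (2 * n + 1) ! j = window y i0 (2 * n + 1) ! j"
        using y(2) by simp
      then show ?thesis
        using j by (simp add: algebra_simps)
    qed
    moreover have "(\<lambda>t. y (t + (i0 + int n))) \<in> X"
      by (rule shift_space_translate[OF X y(1)])
    ultimately show ?thesis
      by (intro bexI[of _ "\<lambda>t. y (t + (i0 + int n))"]) auto
  qed
  then show ?thesis
    using X unfolding shift_space_def closed_sh_def by blast
qed

definition with_factors_in :: "(int \<Rightarrow> 'a) set \<Rightarrow> 'a list set \<Rightarrow> (int \<Rightarrow> 'a) set" where
  "with_factors_in X F = {x \<in> X. \<forall>i n. window x i n \<in> F}"

lemma closed_sh_with_factors_in:
  assumes "closed_sh X"
  shows "closed_sh (with_factors_in X F)"
  unfolding closed_sh_def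
proof (intro allI impI)
  fix x
  assume near: "\<forall>n. \<exists>y\<in>with_factors_in X F. \<forall>i. \<bar>i\<bar> \<le> int n \<longrightarrow> y i = x i"
  then have "x \<in> X"
    using assms unfolding closed_sh_def with_factors_in_def by blast
  moreover have "window x i n \<in> F" for i n
  proof -
    obtain y where "y \<in> X" "\<forall>i n. window y i n \<in> F" "\<forall>t. \<bar>t\<bar> \<le> int (nat \<bar>i\<bar> + n) \<longrightarrow> y t = x t"
      using near unfolding with_factors_in_def by blast
    moreover have "window y i n = window x i n"
      using calculation(3) by (intro nth_equalityI) auto
    ultimately show ?thesis by metis
  qed
  ultimately show "x \<in> with_factors_in X F"
    unfolding with_factors_in_def by blast
qed

lemma shift_with_factors_in:
  assumes X: "shift_space X"
  shows "shift ` with_factors_in X F = with_factors_in X F"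
proof -
  let ?Y = "{x \<in> X. \<forall>i n. window x i n \<in> F}"
  have window_shift: "window (shift x) i n = window x (i + 1) n" for x :: "int \<Rightarrow> 'a" and i n
    unfolding window_def shift_def by (simp add: algebra_simps)
  have "shift x \<in> X" if "x \<in> X" for x
    using shift_space_translate[OF X that, of 1] unfolding shift_def .
  then have "shift ` ?Y \<subseteq> ?Y"
    by (auto simp: window_shift)
  moreover have "x \<in> shift ` ?Y" if "x \<in> ?Y" for x
  proof -
    define y where "y = (\<lambda>j. x (j + - 1))"
    have x: "x = shift y"
      unfolding y_def shift_def by simp
    have "window y i n = window x (i - 1) n" for i n
      using window_shift[of y "i - 1" n] x by simp
    then have "y \<in> ?Y"
      using that shift_space_translate[OF X, of x "- 1"] unfolding y_def by auto
    then show ?thesis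
      using x by blast
  qed
  ultimately show ?thesis
    unfolding with_factors_in_def by blast
qed

text \<open>The language of a minimal shift is irreducible: compactness yields a point all of whose
  factors follow \<open>v\<close>; the points with this property form a subshift, which by minimality is
  all of \<open>X\<close>.\<close>

lemma minimal_shift_lang_irreducible:
  assumes min: "minimal_shift (X :: (int \<Rightarrow> 'a::finite) set)"
    and v: "v \<in> lang X" and w: "w \<in> lang X"
  shows "\<exists>p. v @ p @ w \<in> lang X"
proof -
  have X: "shift_space X"
    using min unfolding minimal_shift_def by blast
  define F where "F = {u. \<exists>p. v @ p @ u \<in> lang X}"
  have F_lang: "u \<in> lang X" if u: "u \<in> F" for u
  proof -
    obtain p where "(v @ p) @ u \<in> lang X"
      using u unfolding F_def by auto
    then show ?thesis by (rule lang_suffix)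
  qed
  have factor: "u \<in> F" if u: "u1 @ u @ u2 \<in> F" for u1 u u2
  proof -
    obtain p where "(v @ (p @ u1) @ u) @ u2 \<in> lang X"
      using u unfolding F_def by auto
    then show ?thesis
      unfolding F_def by (blast dest: lang_prefix)
  qed
  have long: "\<exists>u\<in>F. length u = n" for n
  proof -
    obtain s where "length s = n" "v @ [] @ s \<in> lang X"
      using lang_extend_right[OF v, of n] by auto
    then show ?thesis
      unfolding F_def by blast
  qed
  have "\<exists>x. \<forall>i n. window x i n \<in> F"
    by (rule factorial_language_point) (use factor long in blast)+
  then obtain x where x: "\<And>i n. window x i n \<in> F"
    by blast
  have "x \<in> with_factors_in X F"
    using shift_space_mem_if_windows[OF X] x F_lang unfolding with_factors_in_def by blast
  moreover have "closed_sh (with_factors_in X F)"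
    by (rule closed_sh_with_factors_in) (use X in \<open>simp add: shift_space_def\<close>)
  moreover have "shift ` with_factors_in X F = with_factors_in X F"
    by (rule shift_with_factors_in[OF X])
  moreover have "with_factors_in X F \<subseteq> X"
    unfolding with_factors_in_def by blast
  ultimately have all: "with_factors_in X F = X"
    using min unfolding minimal_shift_def by blast
  obtain y i where y: "y \<in> X" "w = window y i (length w)"
    using w unfolding lang_window by blast
  have "window y i (length w) \<in> F"
    using all y(1) unfolding with_factors_in_def by blast
  then have "w \<in> F"
    by (simp only: y(2)[symmetric])
  then show ?thesis
    unfolding F_def by blast
qed

section \<open>Planar dendric languages\<close>

text \<open>The two connectivity axioms say that the extension graph of \<open>w\<close> is connected: a colouring
  of its vertices (\<open>SL\<close> on left, \<open>SR\<close> on right extensions) that is constant along every edge is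
  constant.\<close>

locale planar_dendric_language =
  fixes L :: "('a::finite) list set" and rL rR :: "'a rel"
  assumes prefix_closed: "u @ v \<in> L \<Longrightarrow> u \<in> L"
    and suffix_closed: "u @ v \<in> L \<Longrightarrow> v \<in> L"
    and extend_left: "w \<in> L \<Longrightarrow> \<exists>a. a # w \<in> L"
    and extend_right: "w \<in> L \<Longrightarrow> \<exists>b. w @ [b] \<in> L"
    and letter: "[a] \<in> L"
    and irreducible: "v \<in> L \<Longrightarrow> w \<in> L \<Longrightarrow> \<exists>p. v @ p @ w \<in> L"
    and connected_left: "(\<And>a b. a # w @ [b] \<in> L \<Longrightarrow> SL a \<longleftrightarrow> SR b)
      \<Longrightarrow> a # w \<in> L \<Longrightarrow> a' # w \<in> L \<Longrightarrow> SL a \<longleftrightarrow> SL a'"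
    and connected_right: "(\<And>a b. a # w @ [b] \<in> L \<Longrightarrow> SL a \<longleftrightarrow> SR b)
      \<Longrightarrow> w @ [b] \<in> L \<Longrightarrow> w @ [b'] \<in> L \<Longrightarrow> SR b \<longleftrightarrow> SR b'"
    and no_square: "a1 \<noteq> a2 \<Longrightarrow> b1 \<noteq> b2 \<Longrightarrow> a1 # w @ [b1] \<in> L \<Longrightarrow> a2 # w @ [b1] \<in> L
      \<Longrightarrow> a1 # w @ [b2] \<in> L \<Longrightarrow> a2 # w @ [b2] \<in> L \<Longrightarrow> False"
    and planar: "a1 # w @ [b1] \<in> L \<Longrightarrow> a2 # w @ [b2] \<in> L \<Longrightarrow> (a1, a2) \<in> rL \<Longrightarrow> a1 \<noteq> a2
      \<Longrightarrow> (b1, b2) \<in> rR"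
    and linear_L: "linear_order rL" and linear_R: "linear_order rR"
begin

definition lessL :: "'a \<Rightarrow> 'a \<Rightarrow> bool" where
  "lessL a b \<longleftrightarrow> (a, b) \<in> rL \<and> a \<noteq> b"

definition consecutiveL :: "'a \<Rightarrow> 'a \<Rightarrow> bool" where
  "consecutiveL c c' \<longleftrightarrow> lessL c c' \<and> (\<forall>d. \<not> (lessL c d \<and> lessL d c'))"

definition words :: "nat \<Rightarrow> 'a list set" where
  "words n = {v \<in> L. length v = n}"

definition left_ext :: "'a list \<Rightarrow> 'a set" where
  "left_ext v = {a. a # v \<in> L}"

abbreviation enumL :: "'a list" where
  "enumL \<equiv> order_enum rL"

lemma Nil_in_L: "[] \<in> L"
  using prefix_closed[of "[]" "[undefined]"] letter by simp

lemma finite_words: "finite (words n)"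
  using finite_lists_length_eq[of "UNIV :: 'a set" n]
  by (rule finite_subset[rotated]) (auto simp: words_def)

lemma lessL_total: "lessL a b \<or> a = b \<or> lessL b a"
  using linear_order_total[OF linear_L] unfolding lessL_def by blast

lemma lessL_enumL_iff:
  "i < length enumL \<Longrightarrow> j < length enumL \<Longrightarrow> lessL (enumL ! i) (enumL ! j) \<longleftrightarrow> i < j"
  unfolding lessL_def by (rule order_enum_less_iff[OF linear_L])

lemma enumL_index: "\<exists>i < length enumL. a = enumL ! i"
  using order_enum(2)[OF linear_L] by (metis UNIV_I in_set_conv_nth)

lemma enumL_consecutive:
  assumes "Suc i < length enumL"
  shows "consecutiveL (enumL ! i) (enumL ! Suc i)"
proof -
  have "\<not> (lessL (enumL ! i) d \<and> lessL d (enumL ! Suc i))" for d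
    using enumL_index[of d] lessL_enumL_iff assms by fastforce
  then show ?thesis
    unfolding consecutiveL_def using lessL_enumL_iff assms by simp
qed

lemma enumL_eq_iff:
  "i < length enumL \<Longrightarrow> j < length enumL \<Longrightarrow> enumL ! i = enumL ! j \<longleftrightarrow> i = j"
  using order_enum(3)[OF linear_L] by (simp add: nth_eq_iff_index_eq)

lemma planar_lessL:
  "a1 # w @ [b1] \<in> L \<Longrightarrow> a2 # w @ [b2] \<in> L \<Longrightarrow> lessL a1 a2 \<Longrightarrow> (b1, b2) \<in> rR"
  using planar unfolding lessL_def by blast

lemma right_ext_between:
  assumes "lessL a1 a2" "lessL a2 a3" "a1 # w @ [z] \<in> L" "a3 # w @ [z] \<in> L" "a2 # w @ [z'] \<in> L"
  shows "z' = z"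
  using planar_lessL[OF assms(3,5,1)] planar_lessL[OF assms(5,4,2)]
    linear_order_antisym[OF linear_R]
  by blast

lemma left_ext_between:
  "lessL a1 a2 \<Longrightarrow> lessL a2 a3 \<Longrightarrow> a1 # v \<in> L \<Longrightarrow> a3 # v \<in> L \<Longrightarrow> a2 # v \<in> L"
proof (induction v rule: rev_induct)
  case Nil
  then show ?case using letter by simp
next
  case (snoc z u)
  have "a1 # u \<in> L" "a3 # u \<in> L"
    using snoc.prems(3,4) prefix_closed[of "_ # u" "[z]"] by auto
  then have "a2 # u \<in> L"
    using snoc.IH snoc.prems(1,2) by blast
  then obtain z' where z': "a2 # u @ [z'] \<in> L"
    using extend_right by fastforce
  then have "z' = z"
    using right_ext_between[OF snoc.prems(1,2)] snoc.prems(3,4) by simp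
  then show ?case
    using z' by simp
qed

lemma right_exts_separated:
  assumes cc': "consecutiveL c c'"
    and disjoint: "\<And>z. \<not> (c # w @ [z] \<in> L \<and> c' # w @ [z] \<in> L)" and c'w: "c' # w \<in> L"
    and z: "c # w @ [z] \<in> L" and b: "a # w @ [b] \<in> L" and a: "lessL c a"
  shows "(b, z) \<notin> rR"
proof
  assume "(b, z) \<in> rR"
  have lt: "lessL c c'" and consec: "\<And>d. \<not> (lessL c d \<and> lessL d c')"
    using cc' unfolding consecutiveL_def by blast+
  have "(z, b) \<in> rR"
    using planar_lessL[OF z b a] .
  then have bz: "b = z"
    using \<open>(b, z) \<in> rR\<close> linear_order_antisym[OF linear_R] by blast
  show False
  proof (cases "a = c'")
    case True
    then show False
      using disjoint z b bz by blast
  next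
    case False
    then have "lessL c' a"
      using consec[of a] a lessL_total by blast
    obtain z' where z': "c' # w @ [z'] \<in> L"
      using extend_right[OF c'w] by auto
    have "(z', b) \<in> rR"
      using planar_lessL[OF z' b \<open>lessL c' a\<close>] .
    moreover have "(z, z') \<in> rR"
      using planar_lessL[OF z z' lt] .
    ultimately have "z' = z"
      using bz linear_order_antisym[OF linear_R] by blast
    then show False
      using disjoint z z' by blast
  qed
qed

text \<open>Otherwise the colouring ``at most \<open>c\<close>'' on the left and ``below some right extension of
  \<open>c w\<close>'' on the right would disconnect the extension graph.\<close>

lemma consecutive_common_right_ext:
  assumes cc': "consecutiveL c c'" and cw: "c # w \<in> L" and c'w: "c' # w \<in> L"
  shows "\<exists>z. c # w @ [z] \<in> L \<and> c' # w @ [z] \<in> L"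
proof (rule ccontr)
  assume "\<not> ?thesis"
  then have disjoint: "\<And>z. \<not> (c # w @ [z] \<in> L \<and> c' # w @ [z] \<in> L)"
    by blast
  define SL where "SL a \<longleftrightarrow> (a, c) \<in> rL" for a
  define SR where "SR b \<longleftrightarrow> (\<exists>z. c # w @ [z] \<in> L \<and> (b, z) \<in> rR)" for b
  have "SL a \<longleftrightarrow> SR b" if ab: "a # w @ [b] \<in> L" for a b
  proof (cases "(a, c) \<in> rL")
    case True
    obtain z where z: "c # w @ [z] \<in> L"
      using extend_right[OF cw] by auto
    have "SR b"
    proof (cases "a = c")
      case True
      then show ?thesis
        using ab linear_order_refl[OF linear_R] unfolding SR_def by blast
    next
      case False
      then show ?thesis
        using planar_lessL[OF ab z] \<open>(a, c) \<in> rL\<close> z unfolding SR_def lessL_def by blast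
    qed
    then show ?thesis
      using True unfolding SL_def by blast
  next
    case False
    then have "lessL c a"
      using linear_order_total[OF linear_L] unfolding lessL_def by blast
    then show ?thesis
      using right_exts_separated[OF cc' disjoint c'w _ ab] False unfolding SL_def SR_def by blast
  qed
  then have "SL c \<longleftrightarrow> SL c'"
    using connected_left[OF _ cw c'w] by blast
  moreover have "SL c" "\<not> SL c'"
    using cc' linear_order_refl[OF linear_L] linear_order_antisym[OF linear_L]
    unfolding SL_def consecutiveL_def lessL_def by blast+
  ultimately show False
    by blast
qed

lemma words_Suc_snoc:
  assumes "v \<in> words (Suc n)"
  obtains u z where "v = u @ [z]" "u \<in> words n" "left_ext v \<subseteq> left_ext u"
proof -
  have "length v = Suc n"
    using assms unfolding words_def by simp
  then obtain u z where v: "v = u @ [z]"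
    by (metis length_Suc_conv_rev)
  have "u \<in> words n"
    using assms prefix_closed[of u "[z]"] unfolding v words_def by simp
  moreover have "left_ext v \<subseteq> left_ext u"
    unfolding v left_ext_def using prefix_closed[of "_ # u" "[z]"] by auto
  ultimately show thesis
    using that v by blast
qed

lemma consecutive_ex1_word:
  assumes cc': "consecutiveL c c'"
  shows "\<exists>!v. v \<in> words n \<and> c \<in> left_ext v \<and> c' \<in> left_ext v"
proof (induction n)
  case 0
  show ?case
    by (rule ex1I[of _ "[]"]) (auto simp: words_def left_ext_def letter Nil_in_L)
next
  case (Suc n)
  from Suc.IH obtain u where u0: "u \<in> words n \<and> c \<in> left_ext u \<and> c' \<in> left_ext u"
    and unique: "\<And>u'. u' \<in> words n \<and> c \<in> left_ext u' \<and> c' \<in> left_ext u' \<Longrightarrow> u' = u"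
    by (elim ex1E) blast
  have u: "u \<in> words n" "c # u \<in> L" "c' # u \<in> L"
    using u0 unfolding left_ext_def by auto
  obtain z where z: "c # u @ [z] \<in> L" "c' # u @ [z] \<in> L"
    using consecutive_common_right_ext[OF cc' u(2,3)] by blast
  have "u @ [z] \<in> L"
    using suffix_closed[of "[c]" "u @ [z]"] z(1) by simp
  then have exists: "u @ [z] \<in> words (Suc n) \<and> c \<in> left_ext (u @ [z]) \<and> c' \<in> left_ext (u @ [z])"
    using z u(1) by (simp add: words_def left_ext_def)
  have "v = u @ [z]" if v: "v \<in> words (Suc n) \<and> c \<in> left_ext v \<and> c' \<in> left_ext v" for v
  proof -
    obtain u' z' where v_eq: "v = u' @ [z']" and "u' \<in> words n" "left_ext v \<subseteq> left_ext u'"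
      using words_Suc_snoc[of v n] v by blast
    then have "u' = u"
      using v unique by blast
    moreover have "c # u' @ [z'] \<in> L" "c' # u' @ [z'] \<in> L"
      using v unfolding v_eq left_ext_def by simp_all
    moreover have "c \<noteq> c'"
      using cc' unfolding consecutiveL_def lessL_def by blast
    ultimately have "z' = z"
      using no_square[of c c' z' z u] z by blast
    then show "v = u @ [z]"
      using v_eq \<open>u' = u\<close> by simp
  qed
  then show ?case
    using exists by blast
qed

definition inner_left_ext :: "nat \<Rightarrow> 'a \<Rightarrow> bool" where
  "inner_left_ext n b \<longleftrightarrow>
    (\<exists>v a c. length v = n \<and> lessL a b \<and> lessL b c \<and> a # v \<in> L \<and> b # v \<in> L \<and> c # v \<in> L)"

lemma inner_left_ext_mono:
  assumes "inner_left_ext n b" "m \<le> n"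
  shows "inner_left_ext m b"
proof -
  obtain v a c where v: "length v = n" "lessL a b" "lessL b c"
    "a # v \<in> L" "b # v \<in> L" "c # v \<in> L"
    using assms(1) unfolding inner_left_ext_def by blast
  have "x # take m v \<in> L" if "x # v \<in> L" for x
    using that prefix_closed[of "x # take m v" "drop m v"] by simp
  then show ?thesis
    unfolding inner_left_ext_def using v assms(2) by (intro exI[of _ "take m v"]) auto
qed

text \<open>By planarity the right extension of \<open>b v\<close> is squeezed between those of \<open>a v\<close> and \<open>c v\<close>.\<close>

lemma inner_left_ext_unique_future:
  assumes inner: "\<And>n. inner_left_ext n b"
  shows "length w = length w' \<Longrightarrow> b # w \<in> L \<Longrightarrow> b # w' \<in> L \<Longrightarrow> w = w'"
proof (induction w arbitrary: w' rule: rev_induct)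
  case Nil
  then show ?case by simp
next
  case (snoc z w)
  obtain w0 z' where w': "w' = w0 @ [z']"
    using snoc.prems(1) by (metis length_Suc_conv_rev)
  have prefix: "b # u \<in> L" if "b # u @ [y] \<in> L" for u y
    using that prefix_closed[of "b # u" "[y]"] by simp
  have "w0 = w"
    using snoc.IH[of w0] snoc.prems prefix w' by simp
  obtain v a c where v: "length v = Suc (length w)" "lessL a b" "lessL b c"
    "a # v \<in> L" "b # v \<in> L" "c # v \<in> L"
    using inner[of "Suc (length w)"] unfolding inner_left_ext_def by blast
  then obtain u y where u: "v = u @ [y]"
    by (metis length_Suc_conv_rev)
  have "u = w"
    using snoc.IH[of u] snoc.prems(2) v(1,5) prefix unfolding u by simp
  then have "z = y" "z' = y"
    using right_ext_between[OF v(2,3)] v(4,6) snoc.prems(2,3) \<open>w0 = w\<close> unfolding u w' by auto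
  then show ?case
    using w' \<open>w0 = w\<close> by simp
qed

lemma inner_left_ext_periodic_future:
  assumes inner: "\<And>n. inner_left_ext n b" and return: "b # p @ [b] \<in> L"
  shows "b # q \<in> L \<Longrightarrow> j < length q \<Longrightarrow> q ! j = (p @ [b]) ! (j mod length (p @ [b]))"
proof (induction "length q" arbitrary: q j rule: less_induct)
  case less
  let ?r = "p @ [b]"
  have take_in: "b # take k r \<in> L" if "b # r \<in> L" for r k
    using that prefix_closed[of "b # take k r" "drop k r"] by simp
  have prefix: "take k q = take k ?r" if "k \<le> length q" "k \<le> length ?r" for k
    using inner_left_ext_unique_future[OF inner _ take_in take_in, OF _ less.prems(1) return] that
    by simp
  show ?case
  proof (cases "j < length ?r")
    case True
    then have "q ! j = ?r ! j"
      using prefix[of "Suc j"] less.prems(2) by (metis Suc_leI lessI nth_take)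
    then show ?thesis
      using True by simp
  next
    case False
    define s where "s = drop (length ?r) q"
    have "take (length ?r) q = ?r"
      using prefix[of "length ?r"] False less.prems(2) by simp
    then have q: "q = ?r @ s"
      using append_take_drop_id[of "length ?r" q] unfolding s_def by simp
    then have "b # s \<in> L"
      using less.prems(1) suffix_closed[of "b # p" "b # s"] by simp
    moreover have "j - length ?r < length s"
      using False less.prems(2) q by simp
    ultimately have "s ! (j - length ?r) = ?r ! ((j - length ?r) mod length ?r)"
      using less.hyps[of s] q by simp
    then show ?thesis
      using False q by (simp add: nth_append mod_if)
  qed
qed

lemma card_words_gt_if_left_special:
  assumes left_special: "\<And>n. \<exists>v a a'. length v = n \<and> a \<noteq> a' \<and> a # v \<in> L \<and> a' # v \<in> L"
  shows "n < card (words n)"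
proof (induction n)
  case 0
  have "[] \<in> words 0"
    using Nil_in_L unfolding words_def by simp
  then show ?case
    using finite_words card_gt_0_iff by blast
next
  case (Suc n)
  have "tl ` words (Suc n) = words n"
  proof
    show "tl ` words (Suc n) \<subseteq> words n"
      using suffix_closed[of "[_]"] by (auto simp: words_def length_Suc_conv)
    show "words n \<subseteq> tl ` words (Suc n)"
    proof
      fix v assume v: "v \<in> words n"
      then obtain a where "a # v \<in> words (Suc n)"
        using extend_left unfolding words_def by auto
      then show "v \<in> tl ` words (Suc n)"
        by force
    qed
  qed
  moreover obtain v a a' where "length v = n" "a \<noteq> a'" "a # v \<in> L" "a' # v \<in> L"
    using left_special by blast
  then have "\<not> inj_on tl (words (Suc n))"
    unfolding inj_on_def words_def by force
  then have "card (tl ` words (Suc n)) \<noteq> card (words (Suc n))"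
    using inj_on_iff_eq_card[OF finite_words] by blast
  then have "card (tl ` words (Suc n)) < card (words (Suc n))"
    using card_image_le[OF finite_words, of tl "Suc n"] by simp
  ultimately show ?case
    using Suc.IH by simp
qed

lemma card_words_le_if_inner:
  assumes inner: "\<And>n. inner_left_ext n b" and return: "b # p @ [b] \<in> L"
  shows "card (words (length (p @ [b]))) \<le> length (p @ [b])"
proof -
  let ?r = "p @ [b]"
  let ?m = "length ?r"
  define rotation where "rotation k = map (\<lambda>j. ?r ! ((k + j) mod ?m)) [0..<?m]" for k
  have "words ?m \<subseteq> rotation ` {..<?m}"
  proof
    fix u
    assume u: "u \<in> words ?m"
    then obtain p' where "[b] @ p' @ u \<in> L"
      using irreducible[OF letter] unfolding words_def by blast
    then have future: "(p' @ u) ! j = ?r ! (j mod ?m)" if "j < length (p' @ u)" for j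
      using inner_left_ext_periodic_future[OF inner return, of "p' @ u" j] that by simp
    have "u = rotation (length p')"
    proof (rule nth_equalityI)
      fix j
      assume j: "j < length u"
      have "u ! j = (p' @ u) ! (length p' + j)"
        by (simp add: nth_append)
      also have "\<dots> = ?r ! ((length p' + j) mod ?m)"
        using future[of "length p' + j"] j by simp
      also have "\<dots> = rotation (length p') ! j"
        using j u unfolding rotation_def words_def by (simp del: upt_Suc)
      finally show "u ! j = rotation (length p') ! j" .
    qed (use u in \<open>simp add: rotation_def words_def\<close>)
    also have "\<dots> = rotation (length p' mod ?m)"
      unfolding rotation_def by (simp add: mod_add_left_eq)
    finally show "u \<in> rotation ` {..<?m}"
      by simp
  qed
  then have "card (words ?m) \<le> card (rotation ` {..<?m})"
    by (intro card_mono) auto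
  also have "\<dots> \<le> ?m"
    using card_image_le[of "{..<?m}" rotation] by simp
  finally show ?thesis .
qed

text \<open>Since the letter \<open>b\<close> returns, its unique future is periodic, which bounds the complexity;
  but every word with an inner left extension is left special, which forces it to grow.\<close>

lemma not_always_inner_left_ext: "\<not> (\<forall>n. inner_left_ext n b)"
proof
  assume "\<forall>n. inner_left_ext n b"
  then have inner: "\<And>n. inner_left_ext n b"
    by blast
  obtain p where "b # p @ [b] \<in> L"
    using irreducible[OF letter letter] by auto
  then have "card (words (length (p @ [b]))) \<le> length (p @ [b])"
    by (rule card_words_le_if_inner[OF inner])
  moreover have "\<exists>v a a'. length v = n \<and> a \<noteq> a' \<and> a # v \<in> L \<and> a' # v \<in> L" for n
    using inner[of n] unfolding inner_left_ext_def lessL_def by blast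
  then have "length (p @ [b]) < card (words (length (p @ [b])))"
    by (rule card_words_gt_if_left_special)
  ultimately show False
    by simp
qed

lemma eventually_no_inner_left_ext: "\<exists>N. \<forall>n\<ge>N. \<forall>b. \<not> inner_left_ext n b"
proof -
  obtain bound where bound: "\<And>b. \<not> inner_left_ext (bound b) b"
    using not_always_inner_left_ext by metis
  have "\<not> inner_left_ext n b" if "Max (range bound) \<le> n" for n b
    using bound[of b] inner_left_ext_mono[of n b "bound b"] that
    by (meson Max_ge finite_UNIV finite_imageI le_trans rangeI)
  then show ?thesis
    by blast
qed

lemma no_inner_left_ext_chain:
  assumes "\<And>b. \<not> inner_left_ext (length v) b" and "k1 < k2" "k2 < k3" "k3 < length enumL"
    and "enumL ! k1 \<in> left_ext v" "enumL ! k2 \<in> left_ext v" "enumL ! k3 \<in> left_ext v"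
  shows False
proof -
  have "lessL (enumL ! k1) (enumL ! k2)" "lessL (enumL ! k2) (enumL ! k3)"
    using assms(2-4) lessL_enumL_iff by auto
  then show False
    using assms(1)[of "enumL ! k2"] assms(5-7) unfolding inner_left_ext_def left_ext_def by blast
qed

lemma left_ext_consecutive_pair:
  assumes no_inner: "\<And>b. \<not> inner_left_ext (length v) b"
    and two: "a \<in> left_ext v" "a' \<in> left_ext v" "a \<noteq> a'"
  shows "\<exists>i. Suc i < length enumL \<and> left_ext v = {enumL ! i, enumL ! Suc i}"
proof -
  obtain i j where ij: "i < j" "j < length enumL" "enumL ! i \<in> left_ext v" "enumL ! j \<in> left_ext v"
  proof -
    obtain k k' where "k < length enumL" "k' < length enumL" "a = enumL ! k" "a' = enumL ! k'"
      using enumL_index by metis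
    then show ?thesis
      using that two by (cases k k' rule: linorder_cases) auto
  qed
  have j: "j = Suc i"
  proof (rule ccontr)
    assume "j \<noteq> Suc i"
    then have "Suc i < j"
      using ij(1) by simp
    then have "lessL (enumL ! i) (enumL ! Suc i)" "lessL (enumL ! Suc i) (enumL ! j)"
      using lessL_enumL_iff ij by auto
    then have "enumL ! Suc i \<in> left_ext v"
      using left_ext_between ij(3,4) unfolding left_ext_def by blast
    then show False
      using no_inner_left_ext_chain[OF no_inner, of i "Suc i" j] \<open>Suc i < j\<close> ij by simp
  qed
  have "c \<in> {enumL ! i, enumL ! Suc i}" if c: "c \<in> left_ext v" for c
  proof -
    obtain k where k: "k < length enumL" "c = enumL ! k"
      using enumL_index by blast
    have "\<not> k < i" "\<not> Suc i < k"
      using no_inner_left_ext_chain[OF no_inner, of k i "Suc i"]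
        no_inner_left_ext_chain[OF no_inner, of i "Suc i" k] ij j k c
      by auto
    then show ?thesis
      using k by (auto simp: not_less le_Suc_eq)
  qed
  then show ?thesis
    using ij j by blast
qed

definition consecutive_word :: "nat \<Rightarrow> nat \<Rightarrow> 'a list" where
  "consecutive_word n i =
    (THE v. v \<in> words n \<and> enumL ! i \<in> left_ext v \<and> enumL ! Suc i \<in> left_ext v)"

lemma consecutive_word:
  assumes "Suc i < length enumL"
  shows "consecutive_word n i \<in> words n" and "enumL ! i \<in> left_ext (consecutive_word n i)"
    and "enumL ! Suc i \<in> left_ext (consecutive_word n i)"
  using theI'[OF consecutive_ex1_word[OF enumL_consecutive[OF assms]]]
  unfolding consecutive_word_def by blast+

lemma consecutive_word_unique:
  assumes "Suc i < length enumL"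
    and "v \<in> words n" "enumL ! i \<in> left_ext v" "enumL ! Suc i \<in> left_ext v"
  shows "consecutive_word n i = v"
  unfolding consecutive_word_def
  by (rule the1_equality[OF consecutive_ex1_word[OF enumL_consecutive[OF assms(1)]]])
    (use assms in blast)

lemma left_ext_consecutive_word:
  assumes no_inner: "\<And>b. \<not> inner_left_ext n b" and i: "Suc i < length enumL"
  shows "left_ext (consecutive_word n i) = {enumL ! i, enumL ! Suc i}"
proof -
  have "length (consecutive_word n i) = n"
    using consecutive_word(1)[OF i] unfolding words_def by simp
  moreover have "enumL ! i \<noteq> enumL ! Suc i"
    using enumL_eq_iff i by simp
  ultimately obtain k where k: "Suc k < length enumL"
    "left_ext (consecutive_word n i) = {enumL ! k, enumL ! Suc k}"
    using left_ext_consecutive_pair no_inner consecutive_word(2,3)[OF i] by metis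
  then have "i = k"
    using consecutive_word(2,3)[OF i, of n] i enumL_eq_iff by auto
  then show ?thesis
    using k by simp
qed

lemma multi_clique_left_ext_eq:
  assumes no_inner: "\<And>b. \<not> inner_left_ext n b"
  shows "multi_clique (words n) left_ext = (\<lambda>(i, e). (consecutive_word n i, e)) ` order_graph rL"
proof -
  let ?E = "\<lambda>i. {enumL ! i, enumL ! Suc i}"
  have "multi_clique (words n) left_ext
      = (\<lambda>i. (consecutive_word n i, ?E i)) ` {i. Suc i < length enumL}"
  proof (intro equalityI subsetI)
    fix x
    assume "x \<in> multi_clique (words n) left_ext"
    then obtain v a a' where x: "x = (v, {a, a'})" "v \<in> words n" "a \<in> left_ext v" "a' \<in> left_ext v"
      "a \<noteq> a'"
      unfolding multi_clique_def by blast
    moreover have "length v = n"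
      using x(2) unfolding words_def by simp
    ultimately obtain i where i: "Suc i < length enumL" "left_ext v = ?E i"
      using left_ext_consecutive_pair no_inner by metis
    then have "consecutive_word n i = v"
      using consecutive_word_unique x(2) by blast
    moreover have "{a, a'} = ?E i"
      using x(3-5) i(2) by auto
    ultimately show "x \<in> (\<lambda>i. (consecutive_word n i, ?E i)) ` {i. Suc i < length enumL}"
      using x(1) i(1) by blast
  next
    fix x
    assume "x \<in> (\<lambda>i. (consecutive_word n i, ?E i)) ` {i. Suc i < length enumL}"
    then obtain i where i: "Suc i < length enumL" "x = (consecutive_word n i, ?E i)"
      by blast
    moreover have "enumL ! i \<noteq> enumL ! Suc i"
      using enumL_eq_iff i(1) by simp
    ultimately show "x \<in> multi_clique (words n) left_ext"
      using consecutive_word[OF i(1)] unfolding multi_clique_def by blast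
  qed
  also have "\<dots> = (\<lambda>(i, e). (consecutive_word n i, e)) ` order_graph rL"
    unfolding order_graph_def Let_def by (auto simp: image_iff)
  finally show ?thesis .
qed

lemma inj_on_consecutive_word:
  assumes no_inner: "\<And>b. \<not> inner_left_ext n b"
  shows "inj_on (consecutive_word n) {i. Suc i < length enumL}"
proof (rule inj_onI)
  fix i j
  assume i: "i \<in> {i. Suc i < length enumL}" and j: "j \<in> {i. Suc i < length enumL}"
    and "consecutive_word n i = consecutive_word n j"
  then have "{enumL ! i, enumL ! Suc i} = {enumL ! j, enumL ! Suc j}"
    using left_ext_consecutive_word[OF no_inner] by (metis mem_Collect_eq)
  then show "i = j"
    using i j enumL_eq_iff by (auto simp: doubleton_eq_iff)
qed

lemma multi_clique_left_ext_eventually: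
  "\<exists>N. \<forall>n\<ge>N. cgraph_iso (multi_clique (words n) left_ext) (order_graph rL)"
proof -
  obtain N where N: "\<And>n b. N \<le> n \<Longrightarrow> \<not> inner_left_ext n b"
    using eventually_no_inner_left_ext by blast
  have colours: "fst ` order_graph rL = {i. Suc i < length enumL}"
    unfolding order_graph_def Let_def by force
  have "cgraph_iso (multi_clique (words n) left_ext) (order_graph rL)" if "N \<le> n" for n
    unfolding multi_clique_left_ext_eq[OF N[OF that]]
    by (rule cgraph_iso_relabel[OF _ cgraph_iso_refl])
      (use inj_on_consecutive_word[OF N[OF that]] colours in simp)
  then show ?thesis
    by blast
qed

end

lemma mem_rev_image_iff: "w \<in> rev ` A \<longleftrightarrow> rev w \<in> A"
  by (metis image_iff rev_rev_ident)

lemma planar_dendric_language_rev: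
  assumes "planar_dendric_language L rL rR"
  shows "planar_dendric_language (rev ` L) rR rL"
proof -
  interpret planar_dendric_language L rL rR
    by fact
  show ?thesis
  proof (unfold_locales, unfold mem_rev_image_iff)
    fix u v
    assume "rev (u @ v) \<in> L"
    then show "rev u \<in> L" "rev v \<in> L"
      using suffix_closed[of "rev v" "rev u"] prefix_closed[of "rev v" "rev u"] by simp_all
  next
    fix w
    assume "rev w \<in> L"
    then show "\<exists>a. rev (a # w) \<in> L" "\<exists>b. rev (w @ [b]) \<in> L"
      using extend_right extend_left by fastforce+
  next
    fix v w
    assume "rev v \<in> L" "rev w \<in> L"
    then obtain p where "rev w @ p @ rev v \<in> L"
      using irreducible by blast
    then show "\<exists>p. rev (v @ p @ w) \<in> L"
      by (intro exI[of _ "rev p"]) simp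
  next
    fix w a a' and SL SR :: "'a \<Rightarrow> bool"
    assume "\<And>a b. rev (a # w @ [b]) \<in> L \<Longrightarrow> SL a \<longleftrightarrow> SR b" "rev (a # w) \<in> L" "rev (a' # w) \<in> L"
    then show "SL a \<longleftrightarrow> SL a'"
      using connected_right[of "rev w" SR SL a a'] by simp
  next
    fix w b b' and SL SR :: "'a \<Rightarrow> bool"
    assume "\<And>a b. rev (a # w @ [b]) \<in> L \<Longrightarrow> SL a \<longleftrightarrow> SR b" "rev (w @ [b]) \<in> L" "rev (w @ [b']) \<in> L"
    then show "SR b \<longleftrightarrow> SR b'"
      using connected_left[of "rev w" SR SL b b'] by simp
  next
    fix w a1 a2 b1 b2
    assume "a1 \<noteq> a2" "b1 \<noteq> b2" "rev (a1 # w @ [b1]) \<in> L" "rev (a2 # w @ [b1]) \<in> L"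
      "rev (a1 # w @ [b2]) \<in> L" "rev (a2 # w @ [b2]) \<in> L"
    then show False
      using no_square[of b1 b2 a1 a2 "rev w"] by simp
  next
    fix w a1 b1 a2 b2
    assume e: "rev (a1 # w @ [b1]) \<in> L" "rev (a2 # w @ [b2]) \<in> L" and a: "(a1, a2) \<in> rR" "a1 \<noteq> a2"
    show "(b1, b2) \<in> rL"
    proof (rule ccontr)
      assume "(b1, b2) \<notin> rL"
      then have "(b2, b1) \<in> rL" "b2 \<noteq> b1"
        using linear_order_total[OF linear_L] linear_order_refl[OF linear_L] by blast+
      then have "(a2, a1) \<in> rR"
        using planar[of b2 "rev w" a2 b1 a1] e by simp
      then show False
        using a linear_order_antisym[OF linear_R] by blast
    qed
  qed (use linear_L linear_R letter in simp_all)
qed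

section \<open>The language of a minimal planar dendric shift\<close>

lemma is_tree_const_if_adj_invariant:
  assumes "is_tree V adj" and "\<And>u v. adj u v \<Longrightarrow> S u = S v" and "u \<in> V" "v \<in> V"
  shows "S u = S v"
proof -
  have "adj\<^sup>*\<^sup>* u v"
    using assms(1,3,4) unfolding is_tree_def by blast
  then show ?thesis
    by (induction rule: rtranclp_induct) (use assms(2) in auto)
qed

lemma ext_iff: "(a, b) \<in> ext X w \<longleftrightarrow> a # w @ [b] \<in> lang X"
  unfolding ext_def by simp

lemma dendric_ext_graph_connected:
  assumes dendric: "dendric X" and w: "w \<in> lang X"
    and compatible: "\<And>a b. a # w @ [b] \<in> lang X \<Longrightarrow> SL a \<longleftrightarrow> SR b"
  shows "a # w \<in> lang X \<Longrightarrow> a' # w \<in> lang X \<Longrightarrow> SL a \<longleftrightarrow> SL a'"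
    and "w @ [b] \<in> lang X \<Longrightarrow> w @ [b'] \<in> lang X \<Longrightarrow> SR b \<longleftrightarrow> SR b'"
proof -
  have const: "case_sum SL SR u = case_sum SL SR v"
    if "u \<in> ext_vertices X w" "v \<in> ext_vertices X w" for u v
  proof (rule is_tree_const_if_adj_invariant[OF _ _ that])
    show "is_tree (ext_vertices X w) (ext_adj X w)"
      using dendric w unfolding dendric_def by blast
  qed (use compatible in \<open>auto simp: ext_adj_def ext_iff\<close>)
  have left: "Inl a \<in> ext_vertices X w" if "a # w \<in> lang X" for a
    using that unfolding ext_vertices_def ext_L_def by blast
  have right: "Inr b \<in> ext_vertices X w" if "w @ [b] \<in> lang X" for b
    using that unfolding ext_vertices_def ext_R_def by blast
  show "SL a \<longleftrightarrow> SL a'" if "a # w \<in> lang X" "a' # w \<in> lang X"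
    using const[OF left[OF that(1)] left[OF that(2)]] by simp
  show "SR b \<longleftrightarrow> SR b'" if "w @ [b] \<in> lang X" "w @ [b'] \<in> lang X"
    using const[OF right[OF that(1)] right[OF that(2)]] by simp
qed

lemma dendric_no_square:
  assumes dendric: "dendric X" and ne: "a1 \<noteq> a2" "b1 \<noteq> b2"
    and e: "a1 # w @ [b1] \<in> lang X" "a2 # w @ [b1] \<in> lang X" "a1 # w @ [b2] \<in> lang X"
      "a2 # w @ [b2] \<in> lang X"
  shows False
proof -
  have w: "w \<in> lang X"
    using e(1) lang_suffix[of "[a1]" "w @ [b1]"] lang_prefix[of w "[b1]"] by simp
  define cycle where "cycle = [Inl a1, Inr b1, Inl a2, Inr b2]"
  have "3 \<le> length cycle" "distinct cycle"
    using ne unfolding cycle_def by auto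
  moreover have "set cycle \<subseteq> ext_vertices X w"
    using e lang_prefix[of "_ # w" "[_]"] lang_suffix[of "[_]" "w @ [_]"]
    unfolding cycle_def ext_vertices_def ext_L_def ext_R_def by auto
  moreover have "ext_adj X w (cycle ! i) (cycle ! ((i + 1) mod length cycle))"
    if "i < length cycle" for i
  proof -
    have "i = 0 \<or> i = 1 \<or> i = 2 \<or> i = 3"
      using that unfolding cycle_def by auto
    then show ?thesis
      using e unfolding cycle_def ext_adj_def ext_iff by auto
  qed
  ultimately show False
    using dendric w unfolding dendric_def is_tree_def by blast
qed

lemma planar_dendric_language_lang:
  fixes X :: "(int \<Rightarrow> 'a::finite) set"
  assumes minimal: "minimal_shift X" and dendric: "dendric X"
    and "linear_order rL" "linear_order rR" and planar: "planar X rL rR"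
  shows "planar_dendric_language (lang X) rL rR"
proof
  show "\<And>u v. u @ v \<in> lang X \<Longrightarrow> u \<in> lang X"
    by (fact lang_prefix)
  show "\<And>u v. u @ v \<in> lang X \<Longrightarrow> v \<in> lang X"
    by (fact lang_suffix)
  show "\<And>w. w \<in> lang X \<Longrightarrow> \<exists>a. a # w \<in> lang X"
    by (rule lang_extend_left)
  show "\<exists>b. w @ [b] \<in> lang X" if w: "w \<in> lang X" for w
  proof -
    obtain s where "length s = 1" "w @ s \<in> lang X"
      using lang_extend_right[OF w] by blast
    then show ?thesis
      by (cases s) auto
  qed
  show "\<And>a. [a] \<in> lang X"
    using minimal unfolding minimal_shift_def shift_space_def by blast
  show "\<And>v w. v \<in> lang X \<Longrightarrow> w \<in> lang X \<Longrightarrow> \<exists>p. v @ p @ w \<in> lang X"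
    by (rule minimal_shift_lang_irreducible[OF minimal])
  show "linear_order rL" "linear_order rR"
    by fact+
next
  fix w a a' and SL SR :: "'a \<Rightarrow> bool"
  assume compatible: "\<And>a b. a # w @ [b] \<in> lang X \<Longrightarrow> SL a \<longleftrightarrow> SR b"
    and a: "a # w \<in> lang X" "a' # w \<in> lang X"
  have "w \<in> lang X"
    using lang_suffix[of "[a]" w] a(1) by simp
  then show "SL a \<longleftrightarrow> SL a'"
    by (rule dendric_ext_graph_connected(1)[OF dendric _ compatible a])
next
  fix w b b' and SL SR :: "'a \<Rightarrow> bool"
  assume compatible: "\<And>a b. a # w @ [b] \<in> lang X \<Longrightarrow> SL a \<longleftrightarrow> SR b"
    and b: "w @ [b] \<in> lang X" "w @ [b'] \<in> lang X"
  show "SR b \<longleftrightarrow> SR b'"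
    by (rule dendric_ext_graph_connected(2)[OF dendric lang_prefix[OF b(1)] compatible b])
next
  fix w a1 a2 b1 b2
  assume "a1 \<noteq> a2" "b1 \<noteq> b2" "a1 # w @ [b1] \<in> lang X" "a2 # w @ [b1] \<in> lang X"
    "a1 # w @ [b2] \<in> lang X" "a2 # w @ [b2] \<in> lang X"
  then show False
    by (rule dendric_no_square[OF dendric])
next
  fix w a1 b1 a2 b2
  assume "a1 # w @ [b1] \<in> lang X" "a2 # w @ [b2] \<in> lang X" "(a1, a2) \<in> rL" "a1 \<noteq> a2"
  moreover have "w \<in> lang X"
    using calculation(1) lang_suffix[of "[a1]" "w @ [b1]"] lang_prefix[of w "[b1]"] by simp
  ultimately show "(b1, b2) \<in> rR"
    using planar unfolding planar_def ext_iff by blast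
qed

theorem mainTheorem20:
  fixes X :: "(int \<Rightarrow> 'a::finite) set" and rL rR :: "'a rel"
  assumes "minimal_shift X" and "dendric X"
    and "linear_order rL" and "linear_order rR"
    and "planar X rL rR"
  shows "GL_is X (order_graph rL) \<and> GR_is X (order_graph rR)"
proof
  interpret left: planar_dendric_language "lang X" rL rR
    by (rule planar_dendric_language_lang[OF assms])
  have "left.words = lang_n X" "left.left_ext = ext_L X"
    unfolding left.words_def left.left_ext_def lang_n_def ext_L_def by simp_all
  then show "GL_is X (order_graph rL)"
    using left.multi_clique_left_ext_eventually unfolding GL_is_def by simp
next
  interpret right: planar_dendric_language "rev ` lang X" rR rL
    by (rule planar_dendric_language_rev[OF planar_dendric_language_lang[OF assms]])
  have words: "lang_n X n = rev ` right.words n" for n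
    unfolding right.words_def lang_n_def by (auto simp: mem_rev_image_iff)
  have left_ext: "ext_R X (rev v) = right.left_ext v" for v
    unfolding right.left_ext_def ext_R_def by (simp add: mem_rev_image_iff)
  obtain N where N:
    "\<And>n. N \<le> n \<Longrightarrow> cgraph_iso (multi_clique (right.words n) right.left_ext) (order_graph rR)"
    using right.multi_clique_left_ext_eventually by blast
  have "cgraph_iso (multi_clique (lang_n X n) (ext_R X)) (order_graph rR)" if "N \<le> n" for n
    unfolding words
    by (rule cgraph_iso_multi_clique_image) (use N[OF that] in \<open>simp_all add: left_ext\<close>)
  then show "GR_is X (order_graph rR)"
    unfolding GR_is_def by blast
qed

end
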